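(* Let $\lambda\in\mathbb{C}$ with $|\lambda|>1$, and let $g,h\in \mathrm{SL}(2,\mathbb{C})$ be $$g=\begin{pmatrix}\lambda&0\\0&\lambda^{-1}\end{pmatrix},\qquad h=\begin{pmatrix}a&b\\c&d\end{pmatrix}.$$ Put $M_g=|\lambda-1|+|\lambda^{-1}-1|$ and suppose $M_g<1$. If $$|abcd|^{1/2}\le \frac{1-M_g}{M_g^2},$$ then the subgroup $\langle g,h\rangle$ is either elementary or not discrete.
   Context: A subgroup of $\mathrm{SL}(2,\mathbb{C})$ is discrete if it is discrete in the matrix topology. It is elementary if its action on $\mathbb{H}^3\cup\partial\mathbb{H}^3$ (via Möbius transformations) has a finite orbit; otherwise it is non-elementary. Since $|\lambda|>1$, $g$ is loxodromic. *)

theory Defs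
  imports "HOL-Analysis.Analysis"
begin

type_synonym cmat2 = "complex^2^2"

definition mat2 :: "complex \<Rightarrow> complex \<Rightarrow> complex \<Rightarrow> complex \<Rightarrow> cmat2" where
  "mat2 a b c d = (\<chi> i j. if i = 1 then (if j = 1 then a else b) else (if j = 1 then c else d))"

definition SL2C :: "cmat2 set" where
  "SL2C = {A. det A = 1}"

inductive_set gen_subgroup :: "cmat2 set \<Rightarrow> cmat2 set" for S where
  gen_base: "A \<in> S \<Longrightarrow> A \<in> gen_subgroup S"
| gen_one: "mat 1 \<in> gen_subgroup S"
| gen_mult: "A \<in> gen_subgroup S \<Longrightarrow> B \<in> gen_subgroup S \<Longrightarrow> A ** B \<in> gen_subgroup S"
| gen_inv: "A \<in> gen_subgroup S \<Longrightarrow> matrix_inv A \<in> gen_subgroup S"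

definition discrete_group :: "cmat2 set \<Rightarrow> bool" where
  "discrete_group G \<longleftrightarrow> discrete G"

text \<open>Points of the closed upper half-space model of H^3 \<union> \<partial>H^3:
  Pt z t with t > 0 is the interior point z + t j, Pt z 0 the boundary point z,
  and Inf the boundary point at infinity.\<close>
datatype hpoint = Inf | Pt complex real

definition hbar :: "hpoint set" where
  "hbar = {Inf} \<union> {Pt z t | z t. t \<ge> 0}"

text \<open>Action of a matrix [[a,b],[c,d]] in SL(2,C) by the Poincare extension
  q \<mapsto> (aq+b)(cq+d)^{-1} (quaternions), which on the boundary is the Moebius map.\<close>
fun mob_act :: "cmat2 \<Rightarrow> hpoint \<Rightarrow> hpoint" where
  "mob_act A Inf =
     (let a = A$1$1; c = A$2$1 in if c = 0 then Inf else Pt (a / c) 0)"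
| "mob_act A (Pt z t) =
     (let a = A$1$1; b = A$1$2; c = A$2$1; d = A$2$2;
          D = (cmod (c*z + d))\<^sup>2 + (cmod c)\<^sup>2 * t\<^sup>2
      in if D = 0 then Inf
         else Pt (((a*z + b) * cnj (c*z + d) + a * cnj c * complex_of_real (t\<^sup>2)) / complex_of_real D)
                 (t / D))"

definition elementary :: "cmat2 set \<Rightarrow> bool" where
  "elementary G \<longleftrightarrow> (\<exists>x\<in>hbar. finite ((\<lambda>A. mob_act A x) ` G))"

end

theory Submission
  imports Defs
begin

text \<open>If h fixes 0 or \<infinity>, or swaps them, the group is elementary. Otherwise iterate
  h_0 = h, h_(n+1) = h_n g h_n^(-1). With E = (\<lambda> - \<lambda>^(-1))^2 the products p_n = a_n b_n c_n d_n
  of the entries of h_n obey p_(n+1) = -E p_n (1 - E p_n), and the hypothesis on |abcd| makes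
  this iteration contract to 0. Then b_n c_n \<rightarrow> 0 while the diagonal of h_n tends to that
  of g; conjugating h_n by a suitable power of g balances |b_n| and |c_n|, producing elements
  of the group different from g that converge to g.\<close>

lemma mat2_nth [simp]:
  "mat2 a b c d $1$1 = a" "mat2 a b c d $1$2 = b" "mat2 a b c d $2$1 = c" "mat2 a b c d $2$2 = d"
  unfolding mat2_def by simp_all

lemma mat2_eq_iff: "mat2 a b c d = mat2 a' b' c' d' \<longleftrightarrow> a = a' \<and> b = b' \<and> c = c' \<and> d = d'"
  by (metis mat2_nth)

lemma mat2_eta: "(A::cmat2) = mat2 (A$1$1) (A$1$2) (A$2$1) (A$2$2)"
  unfolding mat2_def by (simp add: vec_eq_iff forall_2)

lemma mat2_one: "mat 1 = mat2 1 0 0 1"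
  unfolding mat2_def mat_def by (simp add: vec_eq_iff forall_2)

lemma matrix_mult_2_nth:
  fixes A B :: cmat2
  shows "(A ** B)$1$1 = A$1$1*B$1$1 + A$1$2*B$2$1" "(A ** B)$1$2 = A$1$1*B$1$2 + A$1$2*B$2$2"
    "(A ** B)$2$1 = A$2$1*B$1$1 + A$2$2*B$2$1" "(A ** B)$2$2 = A$2$1*B$1$2 + A$2$2*B$2$2"
  by (simp_all add: matrix_matrix_mult_def sum_2)

lemma mat2_mult:
  "mat2 a b c d ** mat2 a' b' c' d' = mat2 (a*a' + b*c') (a*b' + b*d') (c*a' + d*c') (c*b' + d*d')"
  by (subst mat2_eta) (simp add: matrix_mult_2_nth)

lemma det_mat2: "det (mat2 a b c d) = a*d - b*c"
  by (simp add: det_2)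

lemma matrix_inv_eqI:
  fixes A B :: "'a::comm_ring_1^'n^'n"
  assumes "A ** B = mat 1" "B ** A = mat 1"
  shows "matrix_inv A = B"
  unfolding matrix_inv_def
proof (rule some_equality)
  fix C assume "A ** C = mat 1 \<and> C ** A = mat 1"
  then have "C = C ** (A ** B)" "C ** A = mat 1" using assms by (auto simp: matrix_mul_rid)
  then show "C = B" by (metis matrix_mul_assoc matrix_mul_lid)
qed (use assms in simp)

lemma matrix_inv_mat2: "a*d - b*c = 1 \<Longrightarrow> matrix_inv (mat2 a b c d) = mat2 d (-b) (-c) a"
  by (rule matrix_inv_eqI) (simp_all add: mat2_mult mat2_one mat2_eq_iff algebra_simps)

lemma matrix_inv_SL2: "det (A::cmat2) = 1 \<Longrightarrow> matrix_inv A = mat2 (A$2$2) (-A$1$2) (-A$2$1) (A$1$1)"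
  by (subst mat2_eta, rule matrix_inv_mat2) (simp add: det_2)

lemma tendsto_mat2:
  assumes "p \<longlonglongrightarrow> p0" "q \<longlonglongrightarrow> q0" "r \<longlonglongrightarrow> r0" "s \<longlonglongrightarrow> s0"
  shows "(\<lambda>n. mat2 (p n) (q n) (r n) (s n)) \<longlonglongrightarrow> mat2 p0 q0 r0 s0"
  unfolding mat2_def by (intro tendsto_vec_lambda) (auto simp: assms)

lemma conj_mat2_diag:
  "s*t = 1 \<Longrightarrow> mat2 s 0 0 t ** mat2 a b c d ** mat2 t 0 0 s = mat2 a (s * s * b) (t * t * c) d"
  by (simp add: mat2_mult mat2_eq_iff algebra_simps)

lemma norm_gt_1_inverse_neq:
  fixes l :: complex
  assumes "cmod l > 1"
  shows "l \<noteq> inverse l" "l + inverse l \<noteq> 0"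
proof -
  have "cmod (inverse l) < cmod l"
    using assms by (simp add: norm_inverse inverse_less_1_iff less_trans[of _ 1])
  then show "l \<noteq> inverse l" "l + inverse l \<noteq> 0"
    using norm_minus_cancel[of "inverse l"] by (auto simp: add_eq_0_iff2 simp del: norm_inverse norm_minus_cancel)
qed

lemma gen_subgroup_det:
  assumes "S \<subseteq> SL2C" "A \<in> gen_subgroup S"
  shows "det A = 1"
  using assms(2)
proof induction
  case (gen_base A) then show ?case using assms(1) by (auto simp: SL2C_def)
next
  case (gen_inv A) then show ?case by (simp add: matrix_inv_SL2 det_mat2 det_2 algebra_simps)
qed (simp_all add: det_mul)

lemma gen_subgroup_subset:
  assumes "S \<subseteq> SL2C" "S \<subseteq> Q" "mat 1 \<in> Q"
    and "\<And>A B. A \<in> Q \<Longrightarrow> B \<in> Q \<Longrightarrow> A ** B \<in> Q"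
    and "\<And>A. A \<in> Q \<Longrightarrow> det A = 1 \<Longrightarrow> matrix_inv A \<in> Q"
  shows "gen_subgroup S \<subseteq> Q"
proof
  fix A assume "A \<in> gen_subgroup S"
  then show "A \<in> Q"
    by induction (use assms gen_subgroup_det[OF assms(1)] in auto)
qed

lemma mat2_diag_power_int_in_gen_subgroup:
  assumes "mat2 l 0 0 (inverse l) \<in> gen_subgroup S" "l \<noteq> 0"
  shows "mat2 (l powi k) 0 0 (inverse l powi k) \<in> gen_subgroup S"
proof -
  have pow: "mat2 (l^n) 0 0 (inverse l^n) \<in> gen_subgroup S" for n
  proof (induction n)
    case 0 then show ?case using gen_one[of S] by (simp add: mat2_one)
  next
    case (Suc n)
    from gen_mult[OF Suc assms(1)] show ?case by (simp add: mat2_mult mult.commute)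
  qed
  have "mat2 (inverse l^n) 0 0 (l^n) \<in> gen_subgroup S" for n
    using gen_inv[OF pow[of n]] assms(2)
    by (simp add: matrix_inv_mat2 power_inverse[symmetric] power_mult_distrib[symmetric])
  with pow show ?thesis by (simp add: power_int_def)
qed

lemma elementaryI:
  "x \<in> hbar \<Longrightarrow> finite F \<Longrightarrow> (\<And>A. A \<in> G \<Longrightarrow> mob_act A x \<in> F) \<Longrightarrow> elementary G"
  unfolding elementary_def by (meson finite_subset image_subsetI)

lemma elementary_if_lower_triangular:
  assumes "S \<subseteq> SL2C" "\<forall>X\<in>S. X$1$2 = 0"
  shows "elementary (gen_subgroup S)"
proof (rule elementaryI)
  have "gen_subgroup S \<subseteq> {A. A$1$2 = 0}"
    using assms by (intro gen_subgroup_subset)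
      (auto simp: mat2_one matrix_mult_2_nth matrix_inv_SL2)
  then show "mob_act A (Pt 0 0) \<in> {Pt 0 0}" if "A \<in> gen_subgroup S" for A
    using that gen_subgroup_det[OF assms(1) that] by (auto simp: Let_def det_2)
qed (auto simp: hbar_def)

lemma elementary_if_upper_triangular:
  assumes "S \<subseteq> SL2C" "\<forall>X\<in>S. X$2$1 = 0"
  shows "elementary (gen_subgroup S)"
proof (rule elementaryI)
  have "gen_subgroup S \<subseteq> {A. A$2$1 = 0}"
    using assms by (intro gen_subgroup_subset)
      (auto simp: mat2_one matrix_mult_2_nth matrix_inv_SL2)
  then show "mob_act A Inf \<in> {Inf}" if "A \<in> gen_subgroup S" for A
    using that by auto
qed (auto simp: hbar_def)

lemma elementary_if_monomial:
  assumes "S \<subseteq> SL2C" "\<forall>X\<in>S. (X$1$2 = 0 \<and> X$2$1 = 0) \<or> (X$1$1 = 0 \<and> X$2$2 = 0)"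
  shows "elementary (gen_subgroup S)"
proof (rule elementaryI)
  have "gen_subgroup S \<subseteq> {A. (A$1$2 = 0 \<and> A$2$1 = 0) \<or> (A$1$1 = 0 \<and> A$2$2 = 0)}"
    using assms by (intro gen_subgroup_subset)
      (auto simp: mat2_one matrix_mult_2_nth matrix_inv_SL2)
  then show "mob_act A Inf \<in> {Inf, Pt 0 0}" if "A \<in> gen_subgroup S" for A
    using that by (auto simp: Let_def)
qed (auto simp: hbar_def)

lemma not_discrete_group_if_tendsto:
  assumes "\<And>n. Z n \<in> G" "L \<in> G" "\<And>n. Z n \<noteq> L" "Z \<longlonglongrightarrow> L"
  shows "\<not> discrete_group G"
proof
  assume "discrete_group G"
  then have "L isolated_in G" using assms(2) by (auto simp: discrete_group_def discrete_def)
  then obtain e where e: "e > 0" "\<forall>y\<in>G. dist L y < e \<longrightarrow> y = L"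
    by (auto simp: isolated_in_dist_Ex_iff)
  obtain n where "dist (Z n) L < e"
    using tendstoD[OF assms(4) e(1)] by (auto dest: eventually_happens)
  then show False using e assms(1,3) by (metis dist_commute)
qed

lemma ex_power_int_between:
  fixes r t :: real
  assumes "r > 1" "t > 0"
  shows "\<exists>k::int. t \<le> r powi k \<and> r powi k < r * t"
proof -
  define k where "k = \<lceil>log r t\<rceil>"
  have k: "r powi k = r powr real_of_int k" using assms by (simp add: powr_real_of_int')
  have "t = r powr (log r t)" using assms by simp
  also have "\<dots> \<le> r powr real_of_int k" using assms unfolding k_def by (intro powr_mono) auto
  finally have "t \<le> r powi k" using k by simp
  moreover have "r powr (real_of_int k - 1) < r powr (log r t)"
    using assms unfolding k_def by (subst powr_less_cancel_iff) linarith+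
  then have "r powi k < r * t"
    using assms by (simp add: k powr_diff field_simps)
  ultimately show ?thesis by blast
qed

text \<open>Conjugation by g^k multiplies b by \<lambda>^(2k) and c by \<lambda>^(-2k); k is chosen so that
  both become of size O(r).\<close>

lemma ex_balancing_power_int:
  fixes l \<beta> \<gamma> :: complex and r :: real
  assumes l: "cmod l > 1" and r: "r > 0" "cmod (\<beta> * \<gamma>) \<le> r\<^sup>2"
  shows "\<exists>k::int. cmod (l powi k * l powi k * \<beta>) \<le> (cmod l)\<^sup>2 * r
                \<and> cmod (inverse l powi k * inverse l powi k * \<gamma>) \<le> (cmod l)\<^sup>2 * r"
proof -
  define R where "R = (cmod l)\<^sup>2"
  have R: "R > 1" using l by (simp add: R_def less_1_mult power2_eq_square)
  have norms: "cmod (l powi k * l powi k * \<beta>) = R powi k * cmod \<beta>"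
    "cmod (inverse l powi k * inverse l powi k * \<gamma>) = cmod \<gamma> / R powi k" for k
     by (simp add: R_def norm_mult norm_power_int power2_eq_square power_int_mult_distrib)
       (simp add: R_def norm_mult norm_inverse norm_power_int power2_eq_square divide_inverse
        power_int_mult_distrib[symmetric] power_int_inverse[symmetric] mult.commute)
  have "r \<le> R * r" using R r by simp
  show ?thesis
  proof (cases "\<beta> = 0")
    case True
    obtain n where "cmod \<gamma> / r < R ^ n" using real_arch_pow[OF R] by blast
    then have "cmod \<gamma> / R ^ n \<le> r"
      using R r by (simp add: field_simps)
    then have "cmod \<gamma> / R ^ n \<le> R * r" using \<open>r \<le> R * r\<close> by (rule order_trans)
    then show ?thesis using True norms(2)[of "int n"] r(1)
      by (intro exI[of _ "int n"]) (simp add: R_def)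
  next
    case False
    then have "r / cmod \<beta> > 0" using r by simp
    then obtain k where k: "r / cmod \<beta> \<le> R powi k" "R powi k < R * (r / cmod \<beta>)"
      using ex_power_int_between[OF R] by blast
    have "R powi k * cmod \<beta> \<le> R * r" using k(2) False by (simp add: field_simps)
    moreover have "cmod \<gamma> / R powi k \<le> r"
    proof -
      have "cmod \<gamma> * cmod \<beta> \<le> r * r" using r(2) by (simp add: norm_mult power2_eq_square mult.commute)
      also have "\<dots> \<le> r * (R powi k * cmod \<beta>)" using k(1) False r by (simp add: field_simps)
      finally have "cmod \<gamma> \<le> r * R powi k" using False by (simp add: mult.assoc)
      then show ?thesis using R by (simp add: field_simps)
    qed
    ultimately show ?thesis using \<open>r \<le> R * r\<close> by (intro exI[of _ k]) (simp add: norms R_def)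
  qed
qed

lemma not_discrete_group_if_off_diagonal_product_vanishes:
  fixes l :: complex and \<alpha> \<beta> \<gamma> \<delta> :: "nat \<Rightarrow> complex"
  assumes l: "cmod l > 1" and g: "mat2 l 0 0 (inverse l) \<in> gen_subgroup S"
    and Y: "\<And>n. mat2 (\<alpha> n) (\<beta> n) (\<gamma> n) (\<delta> n) \<in> gen_subgroup S"
    and off_diagonal: "\<And>n. \<beta> n \<noteq> 0 \<or> \<gamma> n \<noteq> 0"
    and lim: "\<alpha> \<longlonglongrightarrow> l" "\<delta> \<longlonglongrightarrow> inverse l" "(\<lambda>n. \<beta> n * \<gamma> n) \<longlonglongrightarrow> 0"
  shows "\<not> discrete_group (gen_subgroup S)"
proof -
  have l0: "l \<noteq> 0" using l by auto
  \<comment> \<open>The summand 1/(n+1) keeps r n positive even when \<beta> n \<gamma> n = 0.\<close>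
  define r where "r n = sqrt (cmod (\<beta> n * \<gamma> n)) + inverse (Suc n)" for n
  have r_pos: "r n > 0" for n by (simp add: r_def add_nonneg_pos)
  have "cmod (\<beta> n * \<gamma> n) \<le> (r n)\<^sup>2" for n
    by (rule sqrt_le_D) (simp add: r_def)
  then have "\<forall>n. \<exists>k::int. cmod (l powi k * l powi k * \<beta> n) \<le> (cmod l)\<^sup>2 * r n
      \<and> cmod (inverse l powi k * inverse l powi k * \<gamma> n) \<le> (cmod l)\<^sup>2 * r n"
    using ex_balancing_power_int[OF l r_pos] by blast
  then obtain k where k: "\<And>n. cmod (l powi k n * l powi k n * \<beta> n) \<le> (cmod l)\<^sup>2 * r n
      \<and> cmod (inverse l powi k n * inverse l powi k n * \<gamma> n) \<le> (cmod l)\<^sup>2 * r n"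
    by (metis (no_types))
  define Z where "Z n = mat2 (\<alpha> n) (l powi k n * l powi k n * \<beta> n)
    (inverse l powi k n * inverse l powi k n * \<gamma> n) (\<delta> n)" for n
  have "Z n \<in> gen_subgroup S" for n
  proof -
    have unit: "l powi k n * inverse l powi k n = 1"
      using l0 by (simp add: power_int_mult_distrib[symmetric])
    have "mat2 (l powi k n) 0 0 (inverse l powi k n) ** mat2 (\<alpha> n) (\<beta> n) (\<gamma> n) (\<delta> n)
          ** mat2 (l powi (- k n)) 0 0 (inverse l powi (- k n)) \<in> gen_subgroup S"
      using mat2_diag_power_int_in_gen_subgroup[OF g l0] Y by (intro gen_mult)
    then show ?thesis
      using conj_mat2_diag[OF unit] by (simp add: Z_def power_int_minus power_int_inverse)
  qed
  moreover have "Z n \<noteq> mat2 l 0 0 (inverse l)" for n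
    using off_diagonal[of n] l0 by (auto simp: Z_def mat2_eq_iff)
  moreover have "Z \<longlonglongrightarrow> mat2 l 0 0 (inverse l)"
  proof -
    have "(\<lambda>n. sqrt (cmod (\<beta> n * \<gamma> n)) + inverse (Suc n)) \<longlonglongrightarrow> sqrt (cmod 0) + 0"
      using lim(3) by (intro tendsto_intros LIMSEQ_inverse_real_of_nat)
    then have bound: "(\<lambda>n. (cmod l)\<^sup>2 * r n) \<longlonglongrightarrow> 0"
      unfolding r_def by (intro tendsto_mult_right_zero) simp
    have "(\<lambda>n. l powi k n * l powi k n * \<beta> n) \<longlonglongrightarrow> 0"
      "(\<lambda>n. inverse l powi k n * inverse l powi k n * \<gamma> n) \<longlonglongrightarrow> 0"
      using k by (intro Lim_null_comparison[OF _ bound] always_eventually allI; blast)+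
    then show ?thesis
      unfolding Z_def using lim by (intro tendsto_mat2)
  qed
  ultimately show ?thesis using g not_discrete_group_if_tendsto by blast
qed

definition jorgensen_seq :: "complex \<Rightarrow> cmat2 \<Rightarrow> nat \<Rightarrow> cmat2" where
  "jorgensen_seq l h n = ((\<lambda>X. X ** mat2 l 0 0 (inverse l) ** matrix_inv X) ^^ n) h"

lemma jorgensen_seq_0 [simp]: "jorgensen_seq l h 0 = h"
  by (simp add: jorgensen_seq_def)

lemma jorgensen_seq_Suc:
  "jorgensen_seq l h (Suc n) = jorgensen_seq l h n ** mat2 l 0 0 (inverse l) ** matrix_inv (jorgensen_seq l h n)"
  by (simp add: jorgensen_seq_def)

lemma jorgensen_seq_in_gen_subgroup:
  assumes "mat2 l 0 0 (inverse l) \<in> gen_subgroup S" "h \<in> gen_subgroup S"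
  shows "jorgensen_seq l h n \<in> gen_subgroup S"
  by (induction n) (simp_all add: assms jorgensen_seq_Suc gen_mult gen_inv)

lemma conj_mat2_diag_inverse:
  assumes "a*d - b*c = 1" "l \<noteq> 0"
  shows "mat2 a b c d ** mat2 l 0 0 (inverse l) ** matrix_inv (mat2 a b c d)
    = mat2 (l + b*c*(l - inverse l)) (a*b*(inverse l - l)) (c*d*(l - inverse l)) (inverse l - b*c*(l - inverse l))"
proof -
  have "l * inverse l = 1" using assms(2) by simp
  with assms(1) show ?thesis
    unfolding matrix_inv_mat2[OF assms(1)] mat2_mult mat2_eq_iff by algebra
qed

lemma conj_mat2_diag_inverse_product:
  fixes a b c d l :: complex
  assumes "a*d - b*c = 1" "l \<noteq> 0"
  defines "E \<equiv> (l - inverse l)\<^sup>2"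
  shows "(l + b*c*(l - inverse l)) * (a*b*(inverse l - l)) * (c*d*(l - inverse l))
      * (inverse l - b*c*(l - inverse l)) = - (E * (a*b*c*d)) * (1 - E * (a*b*c*d))"
proof -
  define m where "m = inverse l"
  have "l * m = 1" using assms by (simp add: m_def)
  with assms(1) show ?thesis unfolding E_def m_def[symmetric] by algebra
qed

lemma conj_mat2_diag_inverse_off_diagonal:
  fixes a b c d l :: complex
  assumes "a*d - b*c = 1" "a \<noteq> 0 \<or> d \<noteq> 0" "b \<noteq> 0 \<or> c \<noteq> 0" "l \<noteq> inverse l"
  shows "a*b*(inverse l - l) \<noteq> 0 \<or> c*d*(l - inverse l) \<noteq> 0"
proof -
  have "a*b \<noteq> 0 \<or> c*d \<noteq> 0"
  proof (cases "b = 0 \<or> c = 0")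
    case True
    then have "a*d = 1" using assms(1) by auto
    then show ?thesis using True assms(3) by auto
  qed (use assms(2) in auto)
  then show ?thesis using assms(4) by auto
qed

lemma det_jorgensen_seq:
  assumes "det h = 1" "l \<noteq> 0"
  shows "det (jorgensen_seq l h n) = 1"
proof (induction n)
  case (Suc n)
  then have "det (matrix_inv (jorgensen_seq l h n)) = 1"
    by (simp add: matrix_inv_SL2 det_mat2 det_2 mult.commute)
  with Suc assms(2) show ?case by (simp add: jorgensen_seq_Suc det_mul det_mat2)
qed (simp add: assms(1))

lemma jorgensen_seq_Suc_mat2:
  fixes n :: nat
  assumes "det h = 1" "l \<noteq> 0"
  defines "X \<equiv> jorgensen_seq l h n"
  shows "jorgensen_seq l h (Suc n) = mat2 (l + X$1$2 * X$2$1 * (l - inverse l))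
    (X$1$1 * X$1$2 * (inverse l - l)) (X$2$1 * X$2$2 * (l - inverse l))
    (inverse l - X$1$2 * X$2$1 * (l - inverse l))"
proof -
  have "X$1$1 * X$2$2 - X$1$2 * X$2$1 = 1"
    using det_jorgensen_seq[OF assms(1,2)] by (simp add: X_def det_2)
  from conj_mat2_diag_inverse[OF this assms(2)] show ?thesis
    by (simp add: jorgensen_seq_Suc X_def[symmetric] flip: mat2_eta)
qed

lemma jorgensen_seq_off_diagonal_nonzero:
  assumes l: "cmod l > 1" and h: "det h = 1" "h$1$1 \<noteq> 0 \<or> h$2$2 \<noteq> 0" "h$1$2 \<noteq> 0 \<or> h$2$1 \<noteq> 0"
  shows "jorgensen_seq l h n $1$2 \<noteq> 0 \<or> jorgensen_seq l h n $2$1 \<noteq> 0"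
proof -
  have l0: "l \<noteq> 0" using l by auto
  note l_inv = norm_gt_1_inverse_neq[OF l]
  have "(jorgensen_seq l h n $1$1 \<noteq> 0 \<or> jorgensen_seq l h n $2$2 \<noteq> 0)
      \<and> (jorgensen_seq l h n $1$2 \<noteq> 0 \<or> jorgensen_seq l h n $2$1 \<noteq> 0)"
  proof (induction n)
    case (Suc n)
    define X where "X = jorgensen_seq l h n"
    have det: "X$1$1 * X$2$2 - X$1$2 * X$2$1 = 1"
      using det_jorgensen_seq[OF h(1) l0] by (simp add: X_def det_2)
    have "(l + X$1$2 * X$2$1 * (l - inverse l)) + (inverse l - X$1$2 * X$2$1 * (l - inverse l))
        = l + inverse l" by simp
    then show ?case
      using conj_mat2_diag_inverse_off_diagonal[OF det] Suc l_inv
      by (auto simp: jorgensen_seq_Suc_mat2[OF h(1) l0] X_def[symmetric])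
  qed (use h in simp)
  then show ?thesis ..
qed

lemma quadratic_iteration_tendsto_zero:
  fixes E :: complex and p :: "nat \<Rightarrow> complex"
  assumes rec: "\<And>n. p (Suc n) = - (E * p n) * (1 - E * p n)"
    and small: "cmod E * (1 + cmod E * cmod (p 0)) < 1"
  shows "(\<lambda>n. E * p n) \<longlonglongrightarrow> 0"
proof -
  define u where "u n = cmod (E * p n)" for n
  define q where "q = cmod E * (1 + u 0)"
  have q: "0 \<le> q" "q < 1" using small by (simp_all add: q_def u_def norm_mult)
  have step: "u (Suc n) \<le> cmod E * u n * (1 + u n)" for n
  proof -
    have "cmod (1 - E * p n) \<le> 1 + u n"
      using norm_triangle_ineq4[of 1 "E * p n"] by (simp add: u_def)
    then have "cmod E * u n * cmod (1 - E * p n) \<le> cmod E * u n * (1 + u n)"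
      by (rule mult_left_mono) (simp add: u_def)
    then show ?thesis
      by (simp add: u_def rec norm_mult mult_ac)
  qed
  have bound: "u n \<le> q^n * u 0" for n
  proof (induction n)
    case (Suc n)
    have "q^n * u 0 \<le> u 0"
      using q by (simp add: mult_left_le_one_le power_le_one u_def)
    with Suc have "u n \<le> u 0" by linarith
    then have "cmod E * u n * (1 + u n) \<le> cmod E * u n * (1 + u 0)"
      by (intro mult_left_mono) (auto simp: u_def)
    also have "\<dots> = q * u n" by (simp add: q_def)
    also have "\<dots> \<le> q * (q^n * u 0)" using Suc q by (simp add: mult_left_mono)
    finally show ?case using step[of n] by simp
  qed simp
  have "(\<lambda>n. q^n * u 0) \<longlonglongrightarrow> 0"
    using q by (intro tendsto_mult_left_zero LIMSEQ_realpow_zero)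
  then show ?thesis
    by (rule Lim_null_comparison[OF always_eventually, rotated]) (use bound in \<open>simp add: u_def\<close>)
qed

lemma jorgensen_seq_off_diagonal_product_tendsto_zero:
  assumes "det h = 1" "l \<noteq> 0"
    and "(cmod (l - inverse l))\<^sup>2 * (1 + (cmod (l - inverse l))\<^sup>2 * cmod (h$1$1 * h$1$2 * h$2$1 * h$2$2)) < 1"
  shows "(\<lambda>n. jorgensen_seq l h n $1$2 * jorgensen_seq l h n $2$1) \<longlonglongrightarrow> 0"
proof -
  define J where "J = jorgensen_seq l h"
  define P where "P n = J n$1$1 * J n$1$2 * J n$2$1 * J n$2$2" for n
  define E where "E = (l - inverse l)\<^sup>2"
  have det: "J n$1$1 * J n$2$2 - J n$1$2 * J n$2$1 = 1" for n
    using det_jorgensen_seq[OF assms(1,2)] by (simp add: J_def det_2)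
  note J_Suc = jorgensen_seq_Suc_mat2[OF assms(1,2), folded J_def]
  have "P (Suc n) = - (E * P n) * (1 - E * P n)" for n
    unfolding P_def E_def J_Suc mat2_nth by (rule conj_mat2_diag_inverse_product[OF det assms(2)])
  then have "(\<lambda>n. E * P n) \<longlonglongrightarrow> 0"
    by (rule quadratic_iteration_tendsto_zero) (use assms(3) in \<open>simp add: E_def P_def J_def norm_power\<close>)
  moreover have "J (Suc n)$1$2 * J (Suc n)$2$1 = - (E * P n)" for n
    by (simp add: J_Suc P_def E_def power2_eq_square algebra_simps)
  ultimately have "(\<lambda>n. J (Suc n)$1$2 * J (Suc n)$2$1) \<longlonglongrightarrow> 0"
    using tendsto_minus[of "\<lambda>n. E * P n" 0] by simp
  then show ?thesis unfolding J_def by (rule LIMSEQ_imp_Suc)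
qed

lemma not_discrete_group_by_jorgensen_seq:
  assumes l: "cmod l > 1" and S: "S \<subseteq> SL2C"
    and g: "mat2 l 0 0 (inverse l) \<in> gen_subgroup S" and h: "h \<in> gen_subgroup S"
    and diagonal: "h$1$1 \<noteq> 0 \<or> h$2$2 \<noteq> 0" and off_diagonal: "h$1$2 \<noteq> 0 \<or> h$2$1 \<noteq> 0"
    and small: "(cmod (l - inverse l))\<^sup>2 * (1 + (cmod (l - inverse l))\<^sup>2 * cmod (h$1$1 * h$1$2 * h$2$1 * h$2$2)) < 1"
  shows "\<not> discrete_group (gen_subgroup S)"
proof -
  have l0: "l \<noteq> 0" using l by auto
  have det: "det h = 1" using gen_subgroup_det[OF S h] .
  define J where "J n = jorgensen_seq l h (Suc n)" for n
  have BC: "(\<lambda>n. jorgensen_seq l h n $1$2 * jorgensen_seq l h n $2$1) \<longlonglongrightarrow> 0"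
    using jorgensen_seq_off_diagonal_product_tendsto_zero[OF det l0 small] .
  have "(\<lambda>n. l + jorgensen_seq l h n $1$2 * jorgensen_seq l h n $2$1 * (l - inverse l)) \<longlonglongrightarrow> l + 0"
    "(\<lambda>n. inverse l - jorgensen_seq l h n $1$2 * jorgensen_seq l h n $2$1 * (l - inverse l))
      \<longlonglongrightarrow> inverse l - 0"
    by (intro tendsto_add tendsto_diff tendsto_const tendsto_mult_left_zero BC)+
  then have lim: "(\<lambda>n. J n $1$1) \<longlonglongrightarrow> l" "(\<lambda>n. J n $2$2) \<longlonglongrightarrow> inverse l"
    by (simp_all add: J_def jorgensen_seq_Suc_mat2[OF det l0])
  have lim_BC: "(\<lambda>n. J n $1$2 * J n $2$1) \<longlonglongrightarrow> 0"
    unfolding J_def using BC by (rule LIMSEQ_Suc)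
  have Y: "mat2 (J n $1$1) (J n $1$2) (J n $2$1) (J n $2$2) \<in> gen_subgroup S" for n
    unfolding J_def mat2_eta[symmetric] using g h by (rule jorgensen_seq_in_gen_subgroup)
  have "J n $1$2 \<noteq> 0 \<or> J n $2$1 \<noteq> 0" for n
    unfolding J_def using l det diagonal off_diagonal by (rule jorgensen_seq_off_diagonal_nonzero)
  from not_discrete_group_if_off_diagonal_product_vanishes[OF l g Y this lim lim_BC]
  show ?thesis .
qed

lemma jorgensen_condition_if_near_identity:
  fixes l x :: complex and M :: real
  assumes M: "cmod (l - 1) + cmod (inverse l - 1) = M" "0 < M" "M < 1"
    and x: "sqrt (cmod x) \<le> (1 - M) / M\<^sup>2"
  shows "(cmod (l - inverse l))\<^sup>2 * (1 + (cmod (l - inverse l))\<^sup>2 * cmod x) < 1"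
proof -
  define e where "e = (cmod (l - inverse l))\<^sup>2"
  have "cmod (l - inverse l) \<le> M"
    using norm_triangle_ineq4[of "l - 1" "inverse l - 1"] M(1) by simp
  then have e: "e \<le> M\<^sup>2" unfolding e_def by (rule power_mono) simp
  have "e * (e * cmod x) \<le> M\<^sup>2 * (M\<^sup>2 * ((1 - M) / M\<^sup>2)\<^sup>2)"
    using e sqrt_le_D[OF x] by (intro mult_mono) (auto simp: e_def)
  also have "\<dots> = (1 - M)\<^sup>2" using M(2) by (simp add: field_simps)
  finally have "e * (1 + e * cmod x) \<le> M\<^sup>2 + (1 - M)\<^sup>2"
    using e by (simp add: distrib_left)
  also have "\<dots> < 1" using M(2,3) by (simp add: power2_eq_square algebra_simps)
  finally show ?thesis by (simp add: e_def)
qed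

theorem theorem2:
  fixes lam a b c d :: complex
  assumes "cmod lam > 1"
    and "mat2 a b c d \<in> SL2C"
    and "cmod (lam - 1) + cmod (inverse lam - 1) < 1"
    and "sqrt (cmod (a*b*c*d)) \<le>
           (1 - (cmod (lam - 1) + cmod (inverse lam - 1))) / (cmod (lam - 1) + cmod (inverse lam - 1))\<^sup>2"
  shows "elementary (gen_subgroup {mat2 lam 0 0 (inverse lam), mat2 a b c d})
         \<or> \<not> discrete_group (gen_subgroup {mat2 lam 0 0 (inverse lam), mat2 a b c d})"
proof -
  define S where "S = {mat2 lam 0 0 (inverse lam), mat2 a b c d}"
  have SL: "S \<subseteq> SL2C"
  proof -
    have "lam \<noteq> 0" using assms(1) by auto
    then show ?thesis using assms(2) by (simp add: S_def SL2C_def det_mat2)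
  qed
  consider "b = 0" | "c = 0" | "a = 0 \<and> d = 0" | "a \<noteq> 0 \<or> d \<noteq> 0" "b \<noteq> 0 \<or> c \<noteq> 0"
    by blast
  then have "elementary (gen_subgroup S) \<or> \<not> discrete_group (gen_subgroup S)"
  proof cases
    case 4
    have "lam \<noteq> 1" using assms(1) by auto
    then have "0 < cmod (lam - 1) + cmod (inverse lam - 1)" by (simp add: add_pos_nonneg)
    then have "(cmod (lam - inverse lam))\<^sup>2 * (1 + (cmod (lam - inverse lam))\<^sup>2 * cmod (a*b*c*d)) < 1"
      using assms(3,4) by (intro jorgensen_condition_if_near_identity[OF refl]) auto
    with 4 have "\<not> discrete_group (gen_subgroup S)"
      by (intro not_discrete_group_by_jorgensen_seq[OF assms(1) SL, where h = "mat2 a b c d"])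
        (auto simp: S_def intro: gen_base)
    then show ?thesis ..
  qed (use SL in \<open>simp_all add: S_def elementary_if_lower_triangular elementary_if_upper_triangular
                                 elementary_if_monomial\<close>)
  then show ?thesis by (simp add: S_def)
qed

end
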